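(* Let $\Phi$ be a root system of rank $r$ and $0\le k\le r$. The $k$-step good root subsystems of $\Phi$ are exactly the closed root subsystems of $\Phi$ of rank $r-k$ that are maximal with respect to inclusion among all closed root subsystems of $\Phi$ of rank $r-k$.
   Context: Root systems are reduced and crystallographic. A root subsystem $\Psi\subseteq\Phi$ is closed if $\lambda,\mu\in\Psi$, $\lambda+\mu\in\Phi$ imply $\lambda+\mu\in\Psi$; $\operatorname{rk}\Psi=\dim\operatorname{Span}\Psi$. A good root subsystem of a root system $\Theta$ of rank $m$ is a closed root subsystem of rank $m-1$ maximal under inclusion among closed root subsystems of $\Theta$ of rank $m-1$. The $0$-step good root subsystem of $\Phi$ is $\Phi$ itself; for $k\ge1$, a $k$-step good root subsystem of $\Phi$ is a good root subsystem of some $(k-1)$-step good root subsystem of $\Phi$ (viewed as a root system in its own right). *)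

theory Defs
  imports "HOL-Analysis.Analysis"
begin

text \<open>Root systems in a finite-dimensional real inner product space (not required to span it;
  the rank is the dimension of the span).  Reduced and crystallographic.\<close>

definition refl_root :: "'a::euclidean_space \<Rightarrow> 'a \<Rightarrow> 'a" where
  "refl_root \<alpha> \<beta> = \<beta> - (2 * (\<beta> \<bullet> \<alpha>) / (\<alpha> \<bullet> \<alpha>)) *\<^sub>R \<alpha>"

definition root_system :: "'a::euclidean_space set \<Rightarrow> bool" where
  "root_system \<Phi> \<longleftrightarrow> finite \<Phi> \<and> 0 \<notin> \<Phi>
     \<and> (\<forall>\<alpha>\<in>\<Phi>. \<forall>\<beta>\<in>\<Phi>. refl_root \<alpha> \<beta> \<in> \<Phi>)
     \<and> (\<forall>\<alpha>\<in>\<Phi>. \<forall>\<beta>\<in>\<Phi>. 2 * (\<beta> \<bullet> \<alpha>) / (\<alpha> \<bullet> \<alpha>) \<in> \<int>)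
     \<and> (\<forall>\<alpha>\<in>\<Phi>. \<forall>c::real. c *\<^sub>R \<alpha> \<in> \<Phi> \<longrightarrow> c = 1 \<or> c = -1)"

definition rank_rs :: "'a::euclidean_space set \<Rightarrow> nat" where
  "rank_rs \<Phi> = dim (span \<Phi>)"

definition root_subsystem :: "'a::euclidean_space set \<Rightarrow> 'a set \<Rightarrow> bool" where
  "root_subsystem \<Phi> \<Psi> \<longleftrightarrow> \<Psi> \<subseteq> \<Phi> \<and> root_system \<Psi>"

definition closed_subsystem :: "'a::euclidean_space set \<Rightarrow> 'a set \<Rightarrow> bool" where
  "closed_subsystem \<Phi> \<Psi> \<longleftrightarrow> root_subsystem \<Phi> \<Psi>
     \<and> (\<forall>x\<in>\<Psi>. \<forall>y\<in>\<Psi>. x + y \<in> \<Phi> \<longrightarrow> x + y \<in> \<Psi>)"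

definition maximal_closed_of_rank :: "'a::euclidean_space set \<Rightarrow> nat \<Rightarrow> 'a set \<Rightarrow> bool" where
  "maximal_closed_of_rank \<Phi> d \<Psi> \<longleftrightarrow> closed_subsystem \<Phi> \<Psi> \<and> rank_rs \<Psi> = d
     \<and> (\<forall>\<Psi>'. closed_subsystem \<Phi> \<Psi>' \<and> rank_rs \<Psi>' = d \<and> \<Psi> \<subseteq> \<Psi>' \<longrightarrow> \<Psi>' = \<Psi>)"

definition good_subsystem :: "'a::euclidean_space set \<Rightarrow> 'a set \<Rightarrow> bool" where
  "good_subsystem \<Theta> \<Psi> \<longleftrightarrow> rank_rs \<Theta> \<ge> 1 \<and> maximal_closed_of_rank \<Theta> (rank_rs \<Theta> - 1) \<Psi>"

fun kstep_good :: "nat \<Rightarrow> 'a::euclidean_space set \<Rightarrow> 'a set \<Rightarrow> bool" where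
  "kstep_good 0 \<Phi> \<Psi> \<longleftrightarrow> \<Psi> = \<Phi>"
| "kstep_good (Suc k) \<Phi> \<Psi> \<longleftrightarrow> (\<exists>\<Theta>. kstep_good k \<Phi> \<Theta> \<and> good_subsystem \<Theta> \<Psi>)"

end

theory Submission
  imports Defs
begin

text \<open>A closed subsystem of maximal rank d is cut out of \<Phi> by its own span: \<Phi> \<inter> span \<Psi> is again
  a closed root subsystem, of the same rank, containing \<Psi>.  Conversely every such "saturated"
  subsystem is maximal, since a larger subsystem of the same rank has the same span.  Saturation is
  transitive, and a saturated subsystem of rank d < rank \<Phi> is saturated of corank one in
  \<Phi> \<inter> span (insert \<alpha> \<Psi>) for any root \<alpha> outside span \<Psi>; an induction on k then identifies the
  k-step good subsystems with the saturated subsystems of rank rank \<Phi> - k.\<close>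

definition saturated_subsystem :: "'a::euclidean_space set \<Rightarrow> 'a set \<Rightarrow> bool" where
  "saturated_subsystem \<Phi> \<Psi> \<longleftrightarrow> \<Psi> = \<Phi> \<inter> span \<Psi>"

lemma root_system_Int_subspace:
  assumes "root_system \<Phi>" "subspace V"
  shows "root_system (\<Phi> \<inter> V)"
  using assms unfolding root_system_def refl_root_def
  by (auto intro: subspace_diff subspace_scale)

lemma closed_subsystem_Int_subspace:
  assumes "root_system \<Phi>" "subspace V"
  shows "closed_subsystem \<Phi> (\<Phi> \<inter> V)"
  using root_system_Int_subspace[OF assms] assms(2)
  unfolding closed_subsystem_def root_subsystem_def
  by (auto intro: subspace_add)

lemma span_Int_span_eq:
  assumes "\<Psi> \<subseteq> \<Phi>"
  shows "span (\<Phi> \<inter> span \<Psi>) = span \<Psi>"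
proof
  show "span (\<Phi> \<inter> span \<Psi>) \<subseteq> span \<Psi>"
    by (metis inf_le2 span_mono span_span)
  show "span \<Psi> \<subseteq> span (\<Phi> \<inter> span \<Psi>)"
    using assms by (intro span_mono) (auto intro: span_base)
qed

lemma saturated_subsystem_subset:
  "saturated_subsystem \<Phi> \<Psi> \<Longrightarrow> \<Psi> \<subseteq> \<Phi>"
  unfolding saturated_subsystem_def by blast

lemma saturated_subsystem_refl: "saturated_subsystem \<Phi> \<Phi>"
  unfolding saturated_subsystem_def using span_base by blast

lemma saturated_subsystem_trans:
  assumes "saturated_subsystem \<Phi> \<Theta>" "saturated_subsystem \<Theta> \<Psi>"
  shows "saturated_subsystem \<Phi> \<Psi>"
proof -
  have "span \<Psi> \<subseteq> span \<Theta>"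
    using assms(2) by (intro span_mono) (rule saturated_subsystem_subset)
  with assms show ?thesis
    unfolding saturated_subsystem_def by blast
qed

lemma root_system_saturated_subsystem:
  assumes "root_system \<Phi>" "saturated_subsystem \<Phi> \<Psi>"
  shows "root_system \<Psi>"
  using root_system_Int_subspace[OF assms(1) subspace_span, of \<Psi>] assms(2)
  unfolding saturated_subsystem_def by simp

lemma saturated_subsystem_full_rank:
  assumes "saturated_subsystem \<Phi> \<Psi>" "rank_rs \<Psi> = rank_rs \<Phi>"
  shows "\<Psi> = \<Phi>"
proof -
  have "span \<Psi> = span \<Phi>"
    using dim_eq_span[OF saturated_subsystem_subset[OF assms(1)]] assms(2)
    unfolding rank_rs_def by (simp add: dim_span)
  then show ?thesis
    using assms(1) span_base unfolding saturated_subsystem_def by blast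
qed

lemma maximal_closed_of_rank_iff_saturated:
  assumes "root_system \<Phi>"
  shows "maximal_closed_of_rank \<Phi> d \<Psi> \<longleftrightarrow> saturated_subsystem \<Phi> \<Psi> \<and> rank_rs \<Psi> = d"
proof
  assume max: "maximal_closed_of_rank \<Phi> d \<Psi>"
  then have sub: "\<Psi> \<subseteq> \<Phi>" and rk: "rank_rs \<Psi> = d"
    unfolding maximal_closed_of_rank_def closed_subsystem_def root_subsystem_def by auto
  have "closed_subsystem \<Phi> (\<Phi> \<inter> span \<Psi>)" "rank_rs (\<Phi> \<inter> span \<Psi>) = d" "\<Psi> \<subseteq> \<Phi> \<inter> span \<Psi>"
    using closed_subsystem_Int_subspace[OF assms subspace_span] rk span_Int_span_eq[OF sub]
      sub span_base unfolding rank_rs_def by auto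
  with max rk show "saturated_subsystem \<Phi> \<Psi> \<and> rank_rs \<Psi> = d"
    unfolding maximal_closed_of_rank_def saturated_subsystem_def by auto
next
  assume "saturated_subsystem \<Phi> \<Psi> \<and> rank_rs \<Psi> = d"
  then have sat: "\<Psi> = \<Phi> \<inter> span \<Psi>" and rk: "rank_rs \<Psi> = d"
    unfolding saturated_subsystem_def by auto
  have "\<Psi>' = \<Psi>" if "closed_subsystem \<Phi> \<Psi>'" "rank_rs \<Psi>' = d" "\<Psi> \<subseteq> \<Psi>'" for \<Psi>'
  proof -
    have "span \<Psi> = span \<Psi>'"
      using dim_eq_span[OF that(3)] that(2) rk unfolding rank_rs_def by (simp add: dim_span)
    moreover have "\<Psi>' \<subseteq> \<Phi>"
      using that(1) unfolding closed_subsystem_def root_subsystem_def by auto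
    ultimately show ?thesis
      using sat that(3) span_base by blast
  qed
  moreover have "closed_subsystem \<Phi> \<Psi>"
    using closed_subsystem_Int_subspace[OF assms subspace_span, of \<Psi>] sat by simp
  ultimately show "maximal_closed_of_rank \<Phi> d \<Psi>"
    using rk unfolding maximal_closed_of_rank_def by blast
qed

lemma good_subsystem_iff_saturated:
  assumes "root_system \<Theta>"
  shows "good_subsystem \<Theta> \<Psi> \<longleftrightarrow>
    1 \<le> rank_rs \<Theta> \<and> saturated_subsystem \<Theta> \<Psi> \<and> rank_rs \<Psi> = rank_rs \<Theta> - 1"
  unfolding good_subsystem_def maximal_closed_of_rank_iff_saturated[OF assms] ..

lemma saturated_subsystem_extend:
  assumes sat: "saturated_subsystem \<Phi> \<Psi>" and less: "rank_rs \<Psi> < rank_rs \<Phi>"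
  obtains \<Theta> where "saturated_subsystem \<Phi> \<Theta>" "saturated_subsystem \<Theta> \<Psi>"
    "rank_rs \<Theta> = Suc (rank_rs \<Psi>)"
proof -
  have sub: "\<Psi> \<subseteq> \<Phi>"
    using sat by (rule saturated_subsystem_subset)
  have "\<not> \<Phi> \<subseteq> span \<Psi>"
    using dim_subset[of \<Phi> "span \<Psi>"] less unfolding rank_rs_def by (auto simp: dim_span)
  then obtain \<alpha> where \<alpha>: "\<alpha> \<in> \<Phi>" "\<alpha> \<notin> span \<Psi>"
    by auto
  define \<Theta> where "\<Theta> = \<Phi> \<inter> span (insert \<alpha> \<Psi>)"
  have span_\<Theta>: "span \<Theta> = span (insert \<alpha> \<Psi>)"
    unfolding \<Theta>_def using \<alpha> sub by (intro span_Int_span_eq) auto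
  show ?thesis
  proof
    show "saturated_subsystem \<Phi> \<Theta>"
      unfolding saturated_subsystem_def span_\<Theta> by (simp add: \<Theta>_def)
    have "span \<Psi> \<subseteq> span (insert \<alpha> \<Psi>)"
      by (rule span_mono) auto
    then show "saturated_subsystem \<Theta> \<Psi>"
      using sat sub span_base[of _ "insert \<alpha> \<Psi>"]
      unfolding saturated_subsystem_def \<Theta>_def by blast
    show "rank_rs \<Theta> = Suc (rank_rs \<Psi>)"
      using span_\<Theta> \<alpha>(2) unfolding rank_rs_def by (simp add: dim_span dim_insert)
  qed
qed

lemma kstep_good_iff_saturated:
  assumes rs: "root_system \<Phi>"
  shows "k \<le> rank_rs \<Phi> \<Longrightarrow>
    kstep_good k \<Phi> \<Psi> \<longleftrightarrow> saturated_subsystem \<Phi> \<Psi> \<and> rank_rs \<Psi> = rank_rs \<Phi> - k"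
proof (induction k arbitrary: \<Psi>)
  case 0
  show ?case
    using saturated_subsystem_full_rank[of \<Phi> \<Psi>] saturated_subsystem_refl[of \<Phi>] by auto
next
  case (Suc k)
  then have IH: "kstep_good k \<Phi> \<Theta> \<longleftrightarrow> saturated_subsystem \<Phi> \<Theta> \<and> rank_rs \<Theta> = rank_rs \<Phi> - k"
    for \<Theta> by simp
  have good_iff: "good_subsystem \<Theta> \<Psi> \<longleftrightarrow>
      saturated_subsystem \<Theta> \<Psi> \<and> rank_rs \<Psi> = rank_rs \<Phi> - Suc k"
    if "saturated_subsystem \<Phi> \<Theta>" "rank_rs \<Theta> = rank_rs \<Phi> - k" for \<Theta>
    using good_subsystem_iff_saturated[OF root_system_saturated_subsystem[OF rs that(1)]]
      that(2) Suc.prems by auto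
  show ?case
  proof
    assume "kstep_good (Suc k) \<Phi> \<Psi>"
    then obtain \<Theta> where "kstep_good k \<Phi> \<Theta>" "good_subsystem \<Theta> \<Psi>"
      by auto
    then have "saturated_subsystem \<Phi> \<Theta>" "rank_rs \<Theta> = rank_rs \<Phi> - k"
      and "saturated_subsystem \<Theta> \<Psi>" "rank_rs \<Psi> = rank_rs \<Phi> - Suc k"
      using IH good_iff by simp_all
    then show "saturated_subsystem \<Phi> \<Psi> \<and> rank_rs \<Psi> = rank_rs \<Phi> - Suc k"
      using saturated_subsystem_trans by simp
  next
    assume sat: "saturated_subsystem \<Phi> \<Psi> \<and> rank_rs \<Psi> = rank_rs \<Phi> - Suc k"
    moreover have "rank_rs \<Psi> < rank_rs \<Phi>" "Suc (rank_rs \<Phi> - Suc k) = rank_rs \<Phi> - k"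
      using sat Suc.prems by simp_all
    ultimately obtain \<Theta> where \<Theta>: "saturated_subsystem \<Phi> \<Theta>" "saturated_subsystem \<Theta> \<Psi>"
      "rank_rs \<Theta> = rank_rs \<Phi> - k"
      by (metis saturated_subsystem_extend)
    then have "kstep_good k \<Phi> \<Theta>" "good_subsystem \<Theta> \<Psi>"
      using IH good_iff[OF \<Theta>(1,3)] sat by simp_all
    then show "kstep_good (Suc k) \<Phi> \<Psi>"
      by auto
  qed
qed

theorem mainTheorem11:
  fixes \<Phi> \<Psi> :: "'a::euclidean_space set" and r k :: nat
  assumes "root_system \<Phi>" and "rank_rs \<Phi> = r" and "k \<le> r"
  shows "kstep_good k \<Phi> \<Psi> \<longleftrightarrow> maximal_closed_of_rank \<Phi> (r - k) \<Psi>"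
  using kstep_good_iff_saturated[OF assms(1)] maximal_closed_of_rank_iff_saturated[OF assms(1)]
    assms(2,3) by simp

end
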